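(* Let $c\ge1$ be an odd integer. Every $c$-indistinguishable finite bias distribution is also $(c+1)$-indistinguishable.
   Context: A finite bias distribution is a probability distribution $\mathcal{P}$ supported on a finite subset of $(0,1)$ that is symmetric: it outputs $a$ and $1-a$ with the same probability. $E_p$ is expectation over $p\sim\mathcal{P}$. $\sigma(p)=\sqrt{(1-p)/p}$; for integers $\ell\ge1$, $0\le x\le\ell$, $f_{\ell,x}(p)=p^x(1-p)^{\ell-x}(x\sigma(p)-(\ell-x)\sigma(1-p))$ and $R_{\ell,x}=\max\{0,E_p[f_{\ell,x}(p)]\}$. For a positive integer $c$, $\mathcal{P}$ is $c$-indistinguishable if $\sum_{x=1}^{\ell-1}\binom{\ell}{x}R_{\ell,x}=0$ for all $2\le\ell\le c$ (so every such distribution is $1$-indistinguishable). *)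

theory Defs
  imports "HOL-Probability.Probability"
begin

definition finite_bias_dist :: "real pmf \<Rightarrow> bool" where
  "finite_bias_dist P \<longleftrightarrow> finite (set_pmf P) \<and> set_pmf P \<subseteq> {0<..<1}
     \<and> (\<forall>a. pmf P a = pmf P (1 - a))"

definition sigma_b :: "real \<Rightarrow> real" where
  "sigma_b p = sqrt ((1 - p) / p)"

definition f_lx :: "nat \<Rightarrow> nat \<Rightarrow> real \<Rightarrow> real" where
  "f_lx l x p = p ^ x * (1 - p) ^ (l - x)
     * (real x * sigma_b p - real (l - x) * sigma_b (1 - p))"

definition R_lx :: "real pmf \<Rightarrow> nat \<Rightarrow> nat \<Rightarrow> real" where
  "R_lx P l x = max 0 (measure_pmf.expectation P (f_lx l x))"

definition indistinguishable :: "nat \<Rightarrow> real pmf \<Rightarrow> bool" where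
  "indistinguishable c P \<longleftrightarrow>
     (\<forall>l. 2 \<le> l \<and> l \<le> c \<longrightarrow> (\<Sum>x=1..l-1. real (l choose x) * R_lx P l x) = 0)"

end

theory Submission
  imports Defs
begin

text \<open>Write \<open>E(l,x)\<close> for the mean of \<open>f\<^sub>l\<^sub>,\<^sub>x\<close>. Because \<open>p \<sigma>(p) = (1-p) \<sigma>(1-p)\<close>, the
  functions satisfy Pascal's rule \<open>f\<^sub>l\<^sub>,\<^sub>x = f\<^sub>l\<^sub>+\<^sub>1\<^sub>,\<^sub>x + f\<^sub>l\<^sub>+\<^sub>1\<^sub>,\<^sub>x\<^sub>+\<^sub>1\<close>, and symmetry of the
  distribution gives \<open>E(l,x) = -E(l,l-x)\<close>. So \<open>c\<close>-indistinguishability, i.e. \<open>E(l,x) \<le> 0\<close>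
  for all inner \<open>x\<close> and \<open>l \<le> c\<close>, forces \<open>E(c,x) = 0\<close> for inner \<open>x\<close>. Pascal's rule then
  makes \<open>E(c+1,x)\<close> alternate in sign for \<open>1 \<le> x \<le> c\<close>, so \<open>E(c+1,c) = E(c+1,1)\<close> as
  \<open>c\<close> is odd, while antisymmetry gives \<open>E(c+1,c) = -E(c+1,1)\<close>. Hence level \<open>c+1\<close> vanishes.\<close>

lemma mult_sigma_b_reflect:
  assumes "0 < p" "p < 1"
  shows "p * sigma_b p = (1 - p) * sigma_b (1 - p)"
proof -
  have "sqrt p * sqrt p = p" "sqrt (1 - p) * sqrt (1 - p) = 1 - p"
    using assms by simp_all
  then have "p * sqrt ((1 - p) / p) = sqrt p * sqrt (1 - p)"
       "(1 - p) * sqrt (p / (1 - p)) = sqrt p * sqrt (1 - p)"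
    using assms by (simp_all add: real_sqrt_divide field_simps)
  then show ?thesis
    unfolding sigma_b_def by simp
qed

lemma f_lx_Pascal:
  assumes "0 < p" "p < 1" and "x \<le> l"
  shows "f_lx l x p = f_lx (l + 1) x p + f_lx (l + 1) (x + 1) p"
proof -
  define s t where "s = sigma_b p" and "t = sigma_b (1 - p)"
  have st: "p * s = (1 - p) * t"
    unfolding s_def t_def using mult_sigma_b_reflect [OF assms(1,2)] .
  have "f_lx (l + 1) x p + f_lx (l + 1) (x + 1) p
      = p ^ x * (1 - p) ^ (l - x) * (real x * s - real (l - x) * t + (p * s - (1 - p) * t))"
    using assms(3) unfolding f_lx_def s_def [symmetric] t_def [symmetric]
    by (simp add: Suc_diff_le of_nat_diff algebra_simps)
  also have "\<dots> = f_lx l x p"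
    using st by (simp add: f_lx_def s_def t_def)
  finally show ?thesis ..
qed

lemma f_lx_reflect:
  assumes "x \<le> l"
  shows "f_lx l x (1 - p) = - f_lx l (l - x) p"
  using assms unfolding f_lx_def by (simp add: algebra_simps)

definition f_lx_mean :: "real pmf \<Rightarrow> nat \<Rightarrow> nat \<Rightarrow> real" where
  "f_lx_mean P l x = measure_pmf.expectation P (f_lx l x)"

lemma map_pmf_reflect_finite_bias_dist:
  assumes "finite_bias_dist P"
  shows "map_pmf (\<lambda>a. 1 - a) P = P"
proof (rule pmf_eqI)
  fix a :: real
  have "inj (\<lambda>a::real. 1 - a)"
    by (auto intro: injI)
  then have "pmf (map_pmf (\<lambda>a. 1 - a) P) (1 - (1 - a)) = pmf P (1 - a)"
    by (rule pmf_map_inj')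
  then show "pmf (map_pmf (\<lambda>a. 1 - a) P) a = pmf P a"
    using assms unfolding finite_bias_dist_def by simp
qed

lemma f_lx_mean_reflect:
  assumes "finite_bias_dist P" and "x \<le> l"
  shows "f_lx_mean P l x = - f_lx_mean P l (l - x)"
proof -
  have "f_lx_mean P l x = measure_pmf.expectation (map_pmf (\<lambda>a. 1 - a) P) (f_lx l x)"
    unfolding f_lx_mean_def map_pmf_reflect_finite_bias_dist [OF assms(1)] ..
  also have "\<dots> = - f_lx_mean P l (l - x)"
    using f_lx_reflect [OF assms(2)] by (simp add: f_lx_mean_def)
  finally show ?thesis .
qed

lemma f_lx_mean_Pascal:
  assumes "finite_bias_dist P" and "x \<le> l"
  shows "f_lx_mean P l x = f_lx_mean P (l + 1) x + f_lx_mean P (l + 1) (x + 1)"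
proof -
  have fin: "finite (set_pmf P)" and sub: "set_pmf P \<subseteq> {0<..<1}"
    using assms(1) unfolding finite_bias_dist_def by auto
  have "f_lx_mean P l x
      = measure_pmf.expectation P (\<lambda>p. f_lx (l + 1) x p + f_lx (l + 1) (x + 1) p)"
    unfolding f_lx_mean_def
    by (rule integral_cong_AE) (use sub f_lx_Pascal [OF _ _ assms(2)] in
          \<open>auto simp: AE_measure_pmf_iff\<close>)
  also have "\<dots> = f_lx_mean P (l + 1) x + f_lx_mean P (l + 1) (x + 1)"
    unfolding f_lx_mean_def
    by (intro Bochner_Integration.integral_add integrable_measure_pmf_finite [OF fin])
  finally show ?thesis .
qed

lemma sum_R_lx_eq_0_iff:
  "(\<Sum>x=1..l-1. real (l choose x) * R_lx P l x) = 0 \<longleftrightarrow> (\<forall>x\<in>{1..l-1}. f_lx_mean P l x \<le> 0)"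
proof -
  have "real (l choose x) * R_lx P l x = 0 \<longleftrightarrow> f_lx_mean P l x \<le> 0" if "x \<in> {1..l-1}" for x
    using that by (auto simp: R_lx_def f_lx_mean_def max_def)
  moreover have "real (l choose x) * R_lx P l x \<ge> 0" for x
    by (simp add: R_lx_def)
  ultimately show ?thesis
    by (simp add: sum_nonneg_eq_0_iff)
qed

lemma indistinguishable_iff:
  "indistinguishable c P \<longleftrightarrow> (\<forall>l\<in>{2..c}. \<forall>x\<in>{1..l-1}. f_lx_mean P l x \<le> 0)"
  unfolding indistinguishable_def sum_R_lx_eq_0_iff by auto

lemma f_lx_mean_eq_0_if_nonpos:
  assumes "finite_bias_dist P" and "\<forall>x\<in>{1..l-1}. f_lx_mean P l x \<le> 0" and "x \<in> {1..l-1}"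
  shows "f_lx_mean P l x = 0"
proof -
  have "l - x \<in> {1..l-1}"
    using assms(3) by auto
  then have "f_lx_mean P l (l - x) \<le> 0"
    using assms(2) by blast
  moreover have "f_lx_mean P l x = - f_lx_mean P l (l - x)"
    using assms(1,3) by (intro f_lx_mean_reflect) auto
  ultimately show ?thesis
    using assms(2,3) by fastforce
qed

lemma f_lx_mean_alternating:
  assumes "finite_bias_dist P" and "\<forall>x\<in>{1..l-1}. f_lx_mean P l x = 0" and "k < l"
  shows "f_lx_mean P (l + 1) (k + 1) = (-1) ^ k * f_lx_mean P (l + 1) 1"
  using assms(3)
proof (induction k)
  case (Suc k)
  have "f_lx_mean P l (k + 1) = 0"
    using assms(2) Suc.prems by auto
  then have "f_lx_mean P (l + 1) (k + 2) = - f_lx_mean P (l + 1) (k + 1)"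
    using f_lx_mean_Pascal [OF assms(1), of "k + 1" l] Suc.prems by simp
  then show ?case
    using Suc by simp
qed simp

lemma f_lx_mean_next_level_eq_0:
  assumes "finite_bias_dist P" and "odd c" and "\<forall>x\<in>{1..c-1}. f_lx_mean P c x = 0"
    and "x \<in> {1..c}"
  shows "f_lx_mean P (c + 1) x = 0"
proof -
  have c: "c \<ge> 1"
    using assms(2) by (cases c) auto
  have alt: "f_lx_mean P (c + 1) (k + 1) = f_lx_mean P (c + 1) 1" if "k < c" "even k" for k
    using f_lx_mean_alternating [OF assms(1,3) that(1)] that(2) by simp
  have "f_lx_mean P (c + 1) c = f_lx_mean P (c + 1) 1"
    using alt [of "c - 1"] c assms(2) by simp
  moreover have "f_lx_mean P (c + 1) c = - f_lx_mean P (c + 1) 1"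
    using f_lx_mean_reflect [OF assms(1), of 1 "c + 1"] by simp
  ultimately have "f_lx_mean P (c + 1) 1 = 0"
    by simp
  then show ?thesis
    using f_lx_mean_alternating [OF assms(1,3), of "x - 1"] assms(4) by auto
qed

theorem proposition4:
  fixes c :: nat and P :: "real pmf"
  assumes "c \<ge> 1" and "odd c"
    and "finite_bias_dist P"
    and "indistinguishable c P"
  shows "indistinguishable (c + 1) P"
proof -
  have "\<forall>x\<in>{1..c-1}. f_lx_mean P c x \<le> 0"
    using assms(4) by (cases "c = 1") (auto simp: indistinguishable_iff)
  then have "\<forall>x\<in>{1..c-1}. f_lx_mean P c x = 0"
    using f_lx_mean_eq_0_if_nonpos [OF assms(3)] by blast
  then have "\<forall>x\<in>{1..c}. f_lx_mean P (c + 1) x \<le> 0"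
    using f_lx_mean_next_level_eq_0 [OF assms(3,2)] by simp
  then show ?thesis
    using assms(4) by (auto simp: indistinguishable_iff le_Suc_eq)
qed

end
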